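(* Let $\theta_0\in\,]0,\pi/2[$, $\ell>0$, $\kappa>0$, and let $I:[0,\infty)\to[0,1]$ be any non-decreasing function. Then the optimization problem (OP1) with light intensity $I$ has at least one optimal solution $(h,\theta)$.
   Context: Model 1 (stem of fixed length $\ell$ and constant leaf density $\kappa$; light comes from a direction making angle $\theta_0$ as below). For $\theta\in[\theta_0,\pi/2]$ define $$G(\theta)=\Big(1-\exp\Big\{\frac{-\kappa}{\cos(\theta-\theta_0)}\Big\}\Big)\cos(\theta-\theta_0),\qquad g(\theta)=\frac{G(\theta)}{\sin\theta}.$$ Given a non-decreasing light intensity function $I:[0,\infty)\to[0,1]$, problem (OP1) is: among all pairs $(h,\theta)$ with $h>0$ and $\theta:[0,h]\to[\theta_0,\pi/2]$ measurable satisfying the length constraint $\int_0^h \frac{dy}{\sin\theta(y)}=\ell$, maximize $J(h,\theta)=\int_0^h I(y)\,g(\theta(y))\,dy$. An optimal solution is an admissible pair attaining the supremum of $J$ over all admissible pairs. *)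

theory Defs
  imports "HOL-Analysis.Analysis"
begin

definition G1 :: "real \<Rightarrow> real \<Rightarrow> real \<Rightarrow> real" where
  "G1 \<kappa> \<theta>\<^sub>0 \<theta> = (1 - exp (- \<kappa> / cos (\<theta> - \<theta>\<^sub>0))) * cos (\<theta> - \<theta>\<^sub>0)"

definition g1 :: "real \<Rightarrow> real \<Rightarrow> real \<Rightarrow> real" where
  "g1 \<kappa> \<theta>\<^sub>0 \<theta> = G1 \<kappa> \<theta>\<^sub>0 \<theta> / sin \<theta>"

definition admissible1 :: "real \<Rightarrow> real \<Rightarrow> real \<Rightarrow> (real \<Rightarrow> real) \<Rightarrow> bool" where
  "admissible1 \<theta>\<^sub>0 len h \<theta> \<longleftrightarrow>
     h > 0 \<and>
     \<theta> \<in> borel_measurable (restrict_space lborel {0..h}) \<and>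
     (\<forall>y\<in>{0..h}. \<theta> y \<in> {\<theta>\<^sub>0..pi/2}) \<and>
     (LINT y:{0..h}|lborel. 1 / sin (\<theta> y)) = len"

definition J1 :: "real \<Rightarrow> real \<Rightarrow> (real \<Rightarrow> real) \<Rightarrow> real \<Rightarrow> (real \<Rightarrow> real) \<Rightarrow> real" where
  "J1 \<kappa> \<theta>\<^sub>0 I h \<theta> = (LINT y:{0..h}|lborel. I y * g1 \<kappa> \<theta>\<^sub>0 (\<theta> y))"

definition optimal1 :: "real \<Rightarrow> real \<Rightarrow> real \<Rightarrow> (real \<Rightarrow> real) \<Rightarrow> real \<Rightarrow> (real \<Rightarrow> real) \<Rightarrow> bool" where
  "optimal1 \<kappa> \<theta>\<^sub>0 len I h \<theta> \<longleftrightarrow>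
     admissible1 \<theta>\<^sub>0 len h \<theta> \<and>
     (\<forall>h' \<theta>'. admissible1 \<theta>\<^sub>0 len h' \<theta>' \<longrightarrow> J1 \<kappa> \<theta>\<^sub>0 I h' \<theta>' \<le> J1 \<kappa> \<theta>\<^sub>0 I h \<theta>)"

end

theory Submission
  imports Defs "HOL-Probability.Helly_Selection"
begin

text \<open>Writing \<open>u = 1 / sin \<theta>\<close>, the length constraint becomes the linear constraint
  \<open>\<integral>\<^sub>0\<^sup>h u = \<ell>\<close> with \<open>u \<in> [1, 1 / sin \<theta>\<^sub>0]\<close>, and the objective becomes \<open>\<integral>\<^sub>0\<^sup>h I(y) \<psi>(u(y))\<close> with
  \<open>\<psi>\<close> continuous and nondecreasing. Since \<open>I\<close> is nondecreasing as well, rearranging \<open>u\<close> into a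
  nondecreasing profile preserves the constraint and does not decrease the objective (done here
  up to \<open>\<epsilon>\<close> on grid-valued approximations, via the bathtub inequality on each superlevel set). A
  maximizing sequence may therefore be taken monotone; the heights lie in a compact interval and
  Helly's selection theorem gives a pointwise limit of the profiles off a countable set, so dominated
  convergence passes both integrals to the limit, which is then optimal.\<close>

section \<open>Monotone rearrangement of grid-valued functions\<close>

lemma downclosed_levels_eq_atLeastAtMost:
  assumes "\<And>j k. 1 \<le> j \<Longrightarrow> j \<le> k \<Longrightarrow> k \<le> K \<Longrightarrow> P k \<Longrightarrow> P j"
  shows "{k\<in>{1..K}. P k} = {1..card {k\<in>{1..K}. P k}}"
proof (cases "{k\<in>{1..K}. P k} = {}")
  case False
  let ?m = "Max {k\<in>{1..K}. P k}"
  have "?m \<in> {k\<in>{1..K}. P k}" using False by (intro Max_in) auto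
  then have "{k\<in>{1..K}. P k} = {1..?m}" using assms by (auto intro: Max_ge)
  then obtain m where "{k\<in>{1..K}. P k} = {1..m}" by blast
  then show ?thesis by simp
qed simp

lemma card_levels_le: "card {k\<in>{1..K}. P k} \<le> K"
proof -
  have "card {k\<in>{1..K}. P k} \<le> card {1..K}" by (rule card_mono) auto
  then show ?thesis by simp
qed

lemma telescope_downclosed_levels:
  fixes f :: "nat \<Rightarrow> 'a::ab_group_add"
  assumes "\<And>j k. 1 \<le> j \<Longrightarrow> j \<le> k \<Longrightarrow> k \<le> K \<Longrightarrow> P k \<Longrightarrow> P j"
  shows "f (card {k\<in>{1..K}. P k}) = f 0 + (\<Sum>k\<in>{1..K}. if P k then f k - f (k - 1) else 0)"
proof -
  let ?m = "card {k\<in>{1..K}. P k}"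
  have "(\<Sum>k\<in>{1..K}. if P k then f k - f (k - 1) else 0) = (\<Sum>k\<in>{1..K} \<inter> {1..?m}. f k - f (k - 1))"
    by (subst downclosed_levels_eq_atLeastAtMost[OF assms, symmetric])
       (auto simp: sum.inter_restrict if_distrib intro!: sum.cong)
  also have "{1..K} \<inter> {1..?m} = {Suc 0..?m}" using card_levels_le[of K P] by auto
  finally show ?thesis using sum_telescope''[of 0 ?m f] by simp
qed

lemma integrable_indicator_times_bounded:
  fixes f :: "real \<Rightarrow> real"
  assumes "f \<in> borel_measurable lborel" and "A \<in> sets lborel" "A \<subseteq> {a..b}"
    and "\<And>y. y \<in> A \<Longrightarrow> \<bar>f y\<bar> \<le> C"
  shows "integrable lborel (\<lambda>y. indicator A y * f y)"
proof (rule integrableI_bounded_set[where A=A and B=C])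
  have "emeasure lborel A \<le> emeasure lborel {a..b}" using assms by (intro emeasure_mono) auto
  also have "\<dots> < \<infinity>" by (simp add: emeasure_lborel_Icc_eq)
  finally show "emeasure lborel A < \<infinity>" .
qed (use assms in auto)

lemma integrable_indicator_Icc_times_bounded:
  fixes f :: "real \<Rightarrow> real"
  assumes "f \<in> borel_measurable lborel" and "\<And>y. \<bar>f y\<bar> \<le> C"
  shows "integrable lborel (\<lambda>y. indicator {a..b} y * f y)"
  using assms by (intro integrable_indicator_times_bounded[where C=C]) auto

lemma integral_mono_weight_le_final_segment:
  fixes w :: "real \<Rightarrow> real"
  assumes w: "mono w" "\<And>y. \<bar>w y\<bar> \<le> C"
    and B: "B \<in> sets lborel" "B \<subseteq> {0..h}" and m: "0 \<le> m" "m \<le> h"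
    and measure_B: "measure lborel B = h - m"
  shows "(\<integral>y. indicator B y * w y \<partial>lborel) \<le> (\<integral>y. indicator {m..h} y * w y \<partial>lborel)"
proof -
  have w_meas: "w \<in> borel_measurable lborel" using borel_measurable_mono[OF w(1)] by simp
  have int_B: "integrable lborel (\<lambda>y. indicator B y * w y)"
    using integrable_indicator_times_bounded[OF w_meas B] w(2) by blast
  have int_final: "integrable lborel (\<lambda>y. indicator {m..h} y * w y)"
    using integrable_indicator_Icc_times_bounded[OF w_meas w(2)] .
  have int_B1: "integrable lborel (\<lambda>y. indicator B y * 1 :: real)"
    using integrable_indicator_times_bounded[OF borel_measurable_const B, of 1 1] by simp
  have int_final1: "integrable lborel (\<lambda>y. indicator {m..h} y * 1 :: real)"
    by (rule integrable_indicator_Icc_times_bounded[where C=1]) auto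
  have pointwise: "w m * (indicator {m..h} y - indicator B y) \<le> indicator {m..h} y * w y - indicator B y * w y" for y
    using B(2) monoD[OF w(1), of y m] monoD[OF w(1), of m y] by (cases "y \<in> B"; cases "y \<in> {m..h}") auto
  have int_ind_diff: "integrable lborel (\<lambda>y. w m * (indicator {m..h} y - indicator B y))"
    using int_B1 int_final1 by (intro integrable_mult_right Bochner_Integration.integrable_diff) simp_all
  have int_diff: "integrable lborel (\<lambda>y. indicator {m..h} y * w y - indicator B y * w y)"
    using int_B int_final by (rule Bochner_Integration.integrable_diff[rotated])
  have "0 = w m * (measure lborel {m..h} - measure lborel B)" using measure_B m by simp
  also have "\<dots> = (\<integral>y. w m * (indicator {m..h} y - indicator B y) \<partial>lborel)"
    using int_B1 int_final1 by simp
  also have "\<dots> \<le> (\<integral>y. indicator {m..h} y * w y - indicator B y * w y \<partial>lborel)"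
    by (rule integral_mono[OF int_ind_diff int_diff pointwise])
  finally have "0 \<le> (\<integral>y. indicator {m..h} y * w y - indicator B y * w y \<partial>lborel)" .
  then show ?thesis using int_B int_final by simp
qed

lemma continuous_at_right_step:
  fixes m c :: real shows "continuous (at_right x) (\<lambda>y. if m \<le> y then c else 0)"
  unfolding continuous_within
proof (rule tendsto_eventually)
  have "\<forall>\<^sub>F y in at_right x. (m \<le> y) = (m \<le> x)"
  proof (cases "m \<le> x")
    case True
    then show ?thesis unfolding eventually_at_right_field by (intro exI[of _ "x + 1"]) auto
  next
    case False
    then show ?thesis unfolding eventually_at_right_field by (intro exI[of _ m]) auto
  qed
  then show "\<forall>\<^sub>F y in at_right x. (if m \<le> y then c else 0) = (if m \<le> x then c else 0)"
    by eventually_elim simp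
qed

lemma borel_measurable_continuous_on_comp:
  fixes \<phi> :: "'a::topological_space \<Rightarrow> 'b::topological_space"
  assumes "continuous_on S \<phi>" and "f \<in> borel_measurable M" and "\<And>y. y \<in> space M \<Longrightarrow> f y \<in> S"
  shows "(\<lambda>y. \<phi> (f y)) \<in> borel_measurable M"
proof -
  have "f \<in> M \<rightarrow>\<^sub>M restrict_space borel S" using assms(2,3) by (intro measurable_restrict_space2) auto
  then show ?thesis
    using measurable_comp[OF _ borel_measurable_continuous_on_restrict[OF assms(1)]] by (simp add: comp_def)
qed

lemma indicator_times_level_expansion:
  fixes A :: "nat \<Rightarrow> 'a set" and g :: "nat \<Rightarrow> real"
  assumes sub: "\<And>k. A k \<subseteq> S" and anti: "\<And>j k. 1 \<le> j \<Longrightarrow> j \<le> k \<Longrightarrow> k \<le> K \<Longrightarrow> A k \<subseteq> A j"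
    and P: "\<And>k. y \<in> S \<Longrightarrow> P k \<longleftrightarrow> y \<in> A k"
  shows "indicator S y * (c * g (card {k\<in>{1..K}. P k})) =
    g 0 * (indicator S y * c) + (\<Sum>k\<in>{1..K}. (g k - g (k - 1)) * (indicator (A k) y * c))"
proof (cases "y \<in> S")
  case True
  have "{k\<in>{1..K}. P k} = {k\<in>{1..K}. y \<in> A k}" using P True by auto
  moreover have "g (card {k\<in>{1..K}. y \<in> A k}) = g 0 + (\<Sum>k\<in>{1..K}. if y \<in> A k then g k - g (k - 1) else 0)"
    using anti by (intro telescope_downclosed_levels) blast
  moreover have "c * (\<Sum>k\<in>{1..K}. if y \<in> A k then g k - g (k - 1) else 0)
      = (\<Sum>k\<in>{1..K}. (g k - g (k - 1)) * (indicator (A k) y * c))"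
    by (auto simp: sum_distrib_left indicator_def intro!: sum.cong)
  ultimately show ?thesis
    using True by (simp add: algebra_simps)
next
  case False
  then have "y \<notin> A k" for k using sub by blast
  then show ?thesis using False by simp
qed

lemma integral_level_expansion:
  fixes A :: "nat \<Rightarrow> real set" and W :: "real \<Rightarrow> real" and g :: "nat \<Rightarrow> real"
  assumes A: "\<And>k. A k \<in> sets lborel" "\<And>k. A k \<subseteq> {a..b}"
      "\<And>j k. 1 \<le> j \<Longrightarrow> j \<le> k \<Longrightarrow> k \<le> K \<Longrightarrow> A k \<subseteq> A j"
    and P: "\<And>k y. y \<in> {a..b} \<Longrightarrow> P k y \<longleftrightarrow> y \<in> A k"
    and W: "W \<in> borel_measurable lborel" "\<And>y. \<bar>W y\<bar> \<le> C"
  shows "(\<integral>y. indicator {a..b} y * (W y * g (card {k\<in>{1..K}. P k y})) \<partial>lborel) =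
    g 0 * (\<integral>y. indicator {a..b} y * W y \<partial>lborel)
      + (\<Sum>k\<in>{1..K}. (g k - g (k - 1)) * (\<integral>y. indicator (A k) y * W y \<partial>lborel))"
proof -
  have int_A: "integrable lborel (\<lambda>y. indicator (A k) y * W y)" for k
    using integrable_indicator_times_bounded[OF W(1) A(1,2)] W(2) by blast
  have int_ab: "integrable lborel (\<lambda>y. indicator {a..b} y * W y)"
    using integrable_indicator_Icc_times_bounded[OF W] .
  have "(\<integral>y. indicator {a..b} y * (W y * g (card {k\<in>{1..K}. P k y})) \<partial>lborel) =
      (\<integral>y. g 0 * (indicator {a..b} y * W y)
        + (\<Sum>k\<in>{1..K}. (g k - g (k - 1)) * (indicator (A k) y * W y)) \<partial>lborel)"
    using A P by (intro Bochner_Integration.integral_cong refl indicator_times_level_expansion) auto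
  also have "\<dots> = g 0 * (\<integral>y. indicator {a..b} y * W y \<partial>lborel)
      + (\<Sum>k\<in>{1..K}. (g k - g (k - 1)) * (\<integral>y. indicator (A k) y * W y \<partial>lborel))"
    using int_A int_ab by simp
  finally show ?thesis .
qed

lemma grid_floor_bounds:
  fixes a \<delta> x :: real
  assumes "0 \<le> \<delta>" and "a \<le> x" and "x \<le> a + real K * \<delta>"
  defines "n \<equiv> card {k\<in>{1..K}. a + real k * \<delta> \<le> x}"
  shows "a + real n * \<delta> \<le> x" and "x \<le> a + real n * \<delta> + \<delta>"
proof -
  have grid_mono: "a + real j * \<delta> \<le> a + real k * \<delta>" if "j \<le> k" for j k
    using that \<open>0 \<le> \<delta>\<close> by (simp add: mult_right_mono)
  have levels: "{k\<in>{1..K}. a + real k * \<delta> \<le> x} = {1..n}"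
    unfolding n_def by (intro downclosed_levels_eq_atLeastAtMost) (blast intro: order_trans grid_mono)
  have "n \<le> K" unfolding n_def by (rule card_levels_le)
  show "a + real n * \<delta> \<le> x"
  proof (cases "n = 0")
    case False
    then have "n \<in> {k\<in>{1..K}. a + real k * \<delta> \<le> x}" unfolding levels by simp
    then show ?thesis by simp
  qed (use \<open>a \<le> x\<close> in simp)
  show "x \<le> a + real n * \<delta> + \<delta>"
  proof (cases "n < K")
    case True
    then have "Suc n \<notin> {k\<in>{1..K}. a + real k * \<delta> \<le> x}" using levels by simp
    then show ?thesis using True by (auto simp: algebra_simps)
  qed (use \<open>n \<le> K\<close> assms(1,3) in auto)
qed

lemma borel_measurable_card_levels:
  fixes t g :: "nat \<Rightarrow> real"
  assumes "mono t" and "u \<in> borel_measurable M"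
  shows "(\<lambda>y. g (card {k\<in>{1..K}. t k \<le> u y})) \<in> borel_measurable M"
proof -
  have "(\<lambda>y. g (card {k\<in>{1..K}. t k \<le> u y}))
      = (\<lambda>y. g 0 + (\<Sum>k\<in>{1..K}. if t k \<le> u y then g k - g (k - 1) else 0))"
    using monoD[OF assms(1)] by (intro ext telescope_downclosed_levels) (meson order_trans)
  also have "\<dots> \<in> borel_measurable M" using assms(2) by measurable
  finally show ?thesis .
qed

lemma step_function_levels:
  fixes t M :: "nat \<Rightarrow> real" and K :: nat
  assumes t: "mono t" and M: "\<And>j k. j \<le> k \<Longrightarrow> M j \<le> M k"
  defines "v \<equiv> \<lambda>y. t (card {k\<in>{1..K}. M k \<le> y})"
  shows "mono v" and "continuous (at_right x) v" and "v y \<in> t ` {..K}"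
proof -
  show "mono v"
    unfolding v_def by (intro monoI monoD[OF t] card_mono) auto
  have "v = (\<lambda>y. t 0 + (\<Sum>k\<in>{1..K}. if M k \<le> y then t k - t (k - 1) else 0))"
    unfolding v_def using M by (intro ext telescope_downclosed_levels) (meson order_trans)
  then show "continuous (at_right x) v"
    by (simp only:) (intro continuous_add continuous_const continuous_sum continuous_at_right_step)
  show "v y \<in> t ` {..K}"
    unfolding v_def using card_levels_le by (intro imageI) (simp only: atMost_iff)
qed

lemma measure_complement_mono:
  fixes B :: "nat \<Rightarrow> real set"
  assumes "0 \<le> h" and B: "\<And>k. B k \<in> sets lborel" "\<And>k. B k \<subseteq> {0..h}"
    and anti: "\<And>j k. j \<le> k \<Longrightarrow> B k \<subseteq> B j"
  shows "h - measure lborel (B k) \<in> {0..h}"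
    and "j \<le> k \<Longrightarrow> h - measure lborel (B j) \<le> h - measure lborel (B k)"
proof -
  have interval: "{0..h} \<in> fmeasurable lborel"
    by (rule fmeasurableI) (simp_all add: emeasure_lborel_Icc_eq)
  show "h - measure lborel (B k) \<in> {0..h}"
    using measure_mono_fmeasurable[OF B(2) B(1) interval, of k] \<open>0 \<le> h\<close> by simp
  show "h - measure lborel (B j) \<le> h - measure lborel (B k)" if "j \<le> k"
    using measure_mono_fmeasurable[OF anti[OF that] B(1) fmeasurableI2[OF interval B(2) B(1)]] by simp
qed

text \<open>The superlevel sets \<open>B k\<close> of a grid-valued function on \<open>[0, h]\<close> are replaced by final segments
  of the same measure; the result is nondecreasing and, by the bathtub inequality, gains weight.\<close>

lemma exists_monotone_rearrangement:
  fixes t :: "nat \<Rightarrow> real" and u w \<phi> :: "real \<Rightarrow> real"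
  assumes t: "mono t" and u: "u \<in> borel_measurable lborel" and "0 \<le> h"
    and \<phi>: "\<And>k. 1 \<le> k \<Longrightarrow> k \<le> K \<Longrightarrow> \<phi> (t (k - 1)) \<le> \<phi> (t k)"
    and w: "mono w" "\<And>y. \<bar>w y\<bar> \<le> C"
  defines "q \<equiv> \<lambda>y. t (card {k\<in>{1..K}. t k \<le> u y})"
  obtains v where "mono v" and "\<And>x. continuous (at_right x) v" and "\<And>y. v y \<in> t ` {..K}"
    and "(\<integral>y. indicator {0..h} y * v y \<partial>lborel) = (\<integral>y. indicator {0..h} y * q y \<partial>lborel)"
    and "(\<integral>y. indicator {0..h} y * (w y * \<phi> (q y)) \<partial>lborel)
      \<le> (\<integral>y. indicator {0..h} y * (w y * \<phi> (v y)) \<partial>lborel)"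
proof -
  define B where "B k = {y\<in>{0..h}. t k \<le> u y}" for k
  define M where "M k = h - measure lborel (B k)" for k
  define v where "v y = t (card {k\<in>{1..K}. M k \<le> y})" for y
  have B: "B k \<in> sets lborel" "B k \<subseteq> {0..h}" for k
    unfolding B_def using u by auto
  have B_anti: "B k \<subseteq> B j" if "j \<le> k" for j k
    unfolding B_def using monoD[OF t that] by auto
  have M: "0 \<le> M k" "M k \<le> h" and M_mono: "j \<le> k \<Longrightarrow> M j \<le> M k" for j k
    unfolding M_def using measure_complement_mono[OF \<open>0 \<le> h\<close> B B_anti] by auto
  have measure_B: "measure lborel (B k) = h - M k" for k
    unfolding M_def by simp
  have q_levels: "t k \<le> u y \<longleftrightarrow> y \<in> B k" if "y \<in> {0..h}" for k y
    using that by (auto simp: B_def)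
  have expand_q: "(\<integral>y. indicator {0..h} y * (W y * g (card {k\<in>{1..K}. t k \<le> u y})) \<partial>lborel) =
      g 0 * (\<integral>y. indicator {0..h} y * W y \<partial>lborel)
      + (\<Sum>k\<in>{1..K}. (g k - g (k - 1)) * (\<integral>y. indicator (B k) y * W y \<partial>lborel))"
    if "W \<in> borel_measurable lborel" "\<And>y. \<bar>W y\<bar> \<le> D" for W :: "real \<Rightarrow> real" and g D
    by (rule integral_level_expansion[where P="\<lambda>k y. t k \<le> u y" and C=D])
       (use B(1) that(1) in \<open>simp_all add: B(2) B_anti q_levels that(2)\<close>)
  have expand_v: "(\<integral>y. indicator {0..h} y * (W y * g (card {k\<in>{1..K}. M k \<le> y})) \<partial>lborel) =
      g 0 * (\<integral>y. indicator {0..h} y * W y \<partial>lborel)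
      + (\<Sum>k\<in>{1..K}. (g k - g (k - 1)) * (\<integral>y. indicator {M k..h} y * W y \<partial>lborel))"
    if "W \<in> borel_measurable lborel" "\<And>y. \<bar>W y\<bar> \<le> D" for W :: "real \<Rightarrow> real" and g D
    by (rule integral_level_expansion[where P="\<lambda>k y. M k \<le> y" and C=D])
       (use that(1) in \<open>auto simp: M M_mono that(2)\<close>)
  show thesis
  proof
    show "mono v"
      unfolding v_def by (rule step_function_levels(1)[where K=K and M=M, OF t M_mono])
    show "continuous (at_right x) v" for x
      unfolding v_def by (rule step_function_levels(2)[where K=K and M=M, OF t M_mono])
    show "v y \<in> t ` {..K}" for y
      unfolding v_def by (rule step_function_levels(3)[where K=K and M=M, OF t M_mono])
    show "(\<integral>y. indicator {0..h} y * v y \<partial>lborel) = (\<integral>y. indicator {0..h} y * q y \<partial>lborel)"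
      using expand_q[of "\<lambda>_. 1" 1 t] expand_v[of "\<lambda>_. 1" 1 t]
      by (simp add: v_def q_def measure_B M)
    have w_meas: "w \<in> borel_measurable lborel" using borel_measurable_mono[OF w(1)] by simp
    have "(\<Sum>k\<in>{1..K}. (\<phi> (t k) - \<phi> (t (k - 1))) * (\<integral>y. indicator (B k) y * w y \<partial>lborel))
      \<le> (\<Sum>k\<in>{1..K}. (\<phi> (t k) - \<phi> (t (k - 1))) * (\<integral>y. indicator {M k..h} y * w y \<partial>lborel))"
      using \<phi> M measure_B B
      by (intro sum_mono mult_left_mono integral_mono_weight_le_final_segment[OF w]) auto
    then show "(\<integral>y. indicator {0..h} y * (w y * \<phi> (q y)) \<partial>lborel)
      \<le> (\<integral>y. indicator {0..h} y * (w y * \<phi> (v y)) \<partial>lborel)"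
      using expand_q[OF w_meas w(2), of "\<lambda>k. \<phi> (t k)"] expand_v[OF w_meas w(2), of "\<lambda>k. \<phi> (t k)"]
      by (simp add: v_def q_def)
  qed
qed

lemma integral_indicator_Icc_diff_le:
  fixes f g :: "real \<Rightarrow> real"
  assumes meas: "f \<in> borel_measurable lborel" "g \<in> borel_measurable lborel"
    and bounded: "\<And>y. \<bar>f y\<bar> \<le> C" "\<And>y. \<bar>g y\<bar> \<le> C"
    and close: "\<And>y. y \<in> {0..h} \<Longrightarrow> \<bar>f y - g y\<bar> \<le> e" and "0 \<le> h"
  shows "\<bar>(\<integral>y. indicator {0..h} y * f y \<partial>lborel) - (\<integral>y. indicator {0..h} y * g y \<partial>lborel)\<bar> \<le> e * h"
proof -
  have int_f: "integrable lborel (\<lambda>y. indicator {0..h} y * f y)"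
    using integrable_indicator_Icc_times_bounded[OF meas(1) bounded(1)] .
  have int_g: "integrable lborel (\<lambda>y. indicator {0..h} y * g y)"
    using integrable_indicator_Icc_times_bounded[OF meas(2) bounded(2)] .
  have int_e: "integrable lborel (\<lambda>y. indicator {0..h} y * e)"
    by (rule integrable_indicator_Icc_times_bounded[where C="\<bar>e\<bar>"]) auto
  have "\<bar>(\<integral>y. indicator {0..h} y * f y \<partial>lborel) - (\<integral>y. indicator {0..h} y * g y \<partial>lborel)\<bar>
      = \<bar>\<integral>y. indicator {0..h} y * f y - indicator {0..h} y * g y \<partial>lborel\<bar>"
    using int_f int_g by simp
  also have "\<dots> \<le> (\<integral>y. \<bar>indicator {0..h} y * f y - indicator {0..h} y * g y\<bar> \<partial>lborel)"
    using integral_norm_bound[of lborel "\<lambda>y. indicator {0..h} y * f y - indicator {0..h} y * g y"] by simp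
  also have "\<dots> \<le> (\<integral>y. indicator {0..h} y * e \<partial>lborel)"
    using int_f int_g int_e close by (intro integral_mono) (auto simp: indicator_def)
  also have "\<dots> = e * h" using \<open>0 \<le> h\<close> by simp
  finally show ?thesis .
qed

lemma integral_indicator_Icc_weighted_comp_diff_le:
  fixes \<phi> w f g :: "real \<Rightarrow> real"
  assumes \<phi>: "continuous_on S \<phi>" "compact S"
    and w: "w \<in> borel_measurable lborel" "\<And>y. \<bar>w y\<bar> \<le> 1"
    and fg: "f \<in> borel_measurable lborel" "g \<in> borel_measurable lborel" "\<And>y. f y \<in> S" "\<And>y. g y \<in> S"
    and close: "\<And>y. \<bar>\<phi> (f y) - \<phi> (g y)\<bar> \<le> e" and "0 \<le> h"
  shows "\<bar>(\<integral>y. indicator {0..h} y * (w y * \<phi> (f y)) \<partial>lborel)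
    - (\<integral>y. indicator {0..h} y * (w y * \<phi> (g y)) \<partial>lborel)\<bar> \<le> e * h"
proof -
  obtain C where C: "\<And>x. x \<in> S \<Longrightarrow> \<bar>\<phi> x\<bar> \<le> C"
    using compact_imp_bounded[OF compact_continuous_image[OF \<phi>]] by (auto simp: bounded_real)
  show ?thesis
  proof (rule integral_indicator_Icc_diff_le[where C=C])
    show "\<bar>w y * \<phi> (f y)\<bar> \<le> C" "\<bar>w y * \<phi> (g y)\<bar> \<le> C" for y
      using mult_mono[OF w(2) C[OF fg(3)]] mult_mono[OF w(2) C[OF fg(4)]] by (simp_all add: abs_mult)
    show "\<bar>w y * \<phi> (f y) - w y * \<phi> (g y)\<bar> \<le> e" for y
      using mult_mono[OF w(2) close] by (simp add: abs_mult right_diff_distrib[symmetric])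
    show "(\<lambda>y. w y * \<phi> (f y)) \<in> borel_measurable lborel"
      using w(1) borel_measurable_continuous_on_comp[OF \<phi>(1) fg(1) fg(3)] by measurable
    show "(\<lambda>y. w y * \<phi> (g y)) \<in> borel_measurable lborel"
      using w(1) borel_measurable_continuous_on_comp[OF \<phi>(1) fg(2) fg(4)] by measurable
  qed (rule \<open>0 \<le> h\<close>)
qed

lemma exists_grid_floor:
  fixes a b d :: real
  assumes "a \<le> b" and "0 < d"
  obtains t :: "nat \<Rightarrow> real" and K where "mono t" and "\<And>j. j \<le> K \<Longrightarrow> t j \<in> {a..b}"
    and "\<And>x. x \<in> {a..b} \<Longrightarrow> \<bar>t (card {k\<in>{1..K}. t k \<le> x}) - x\<bar> < d"
proof -
  obtain K :: nat where K: "(b - a) / d < K" using reals_Archimedean2 by blast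
  define \<delta> where "\<delta> = (b - a) / K"
  have "0 \<le> (b - a) / d" using assms by simp
  then have "0 < K" using K by linarith
  then have \<delta>: "0 \<le> \<delta>" "\<delta> < d" "b = a + real K * \<delta>"
    using K assms by (auto simp: \<delta>_def field_simps)
  show thesis
  proof
    show "mono (\<lambda>j. a + real j * \<delta>)" using \<delta> by (auto simp: mono_def mult_right_mono)
    show "a + real j * \<delta> \<in> {a..b}" if "j \<le> K" for j
      using that \<delta> by (auto simp: mult_right_mono)
    show "\<bar>a + real (card {k\<in>{1..K}. a + real k * \<delta> \<le> x}) * \<delta> - x\<bar> < d" if "x \<in> {a..b}" for x
      using grid_floor_bounds[of \<delta> a x K] that \<delta> by auto
  qed
qed

lemma exists_monotone_step_approximation:
  fixes \<phi> w u :: "real \<Rightarrow> real"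
  assumes \<phi>: "mono_on {a..b} \<phi>" "continuous_on {a..b} \<phi>"
    and w: "mono w" "\<And>y. 0 \<le> w y" "\<And>y. w y \<le> 1"
    and u: "u \<in> borel_measurable lborel" "\<And>y. u y \<in> {a..b}"
    and h: "0 < h" and \<epsilon>: "0 < \<epsilon>"
  obtains v where "mono v" and "\<And>x. continuous (at_right x) v" and "\<And>y. v y \<in> {a..b}"
    and "\<bar>(\<integral>y. indicator {0..h} y * v y \<partial>lborel) - (\<integral>y. indicator {0..h} y * u y \<partial>lborel)\<bar> \<le> \<epsilon>"
    and "(\<integral>y. indicator {0..h} y * (w y * \<phi> (u y)) \<partial>lborel) - \<epsilon>
      \<le> (\<integral>y. indicator {0..h} y * (w y * \<phi> (v y)) \<partial>lborel)"
proof -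
  have "a \<le> b" using u(2)[of 0] by simp
  define \<eta> where "\<eta> = \<epsilon> / (h + 1)"
  have \<eta>: "0 < \<eta>" "\<eta> * h \<le> \<epsilon>" using h \<epsilon> by (auto simp: \<eta>_def field_simps)
  obtain d where d: "0 < d"
    and \<phi>_uc: "\<And>x x'. x \<in> {a..b} \<Longrightarrow> x' \<in> {a..b} \<Longrightarrow> \<bar>x' - x\<bar> < d \<Longrightarrow> \<bar>\<phi> x' - \<phi> x\<bar> < \<eta>"
    using compact_uniformly_continuous[OF \<phi>(2) compact_Icc] \<eta>(1)
    unfolding uniformly_continuous_on_def dist_real_def by metis
  have "0 < min d \<eta>" using d \<eta> by simp
  then obtain t :: "nat \<Rightarrow> real" and K where t: "mono t" and t_range: "\<And>j. j \<le> K \<Longrightarrow> t j \<in> {a..b}"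
    and floor: "\<And>x. x \<in> {a..b} \<Longrightarrow> \<bar>t (card {k\<in>{1..K}. t k \<le> x}) - x\<bar> < min d \<eta>"
    using exists_grid_floor[OF \<open>a \<le> b\<close>] by blast
  define q where "q y = t (card {k\<in>{1..K}. t k \<le> u y})" for y
  have grid_range: "x \<in> t ` {..K} \<Longrightarrow> x \<in> {a..b}" for x using t_range by auto
  have q_range: "q y \<in> {a..b}" for y
    unfolding q_def using t_range[OF card_levels_le] .
  have q_close: "\<bar>q y - u y\<bar> < min d \<eta>" for y
    unfolding q_def using floor[OF u(2)] .
  have \<phi>_grid: "\<phi> (t (k - 1)) \<le> \<phi> (t k)" if "1 \<le> k" "k \<le> K" for k
    using that t_range by (intro mono_onD[OF \<phi>(1)] monoD[OF t]) auto
  have w_abs: "\<bar>w y\<bar> \<le> 1" for y using w(2,3)[of y] by simp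
  obtain v where v: "mono v" "\<And>x. continuous (at_right x) v" "\<And>y. v y \<in> t ` {..K}"
    and v_length: "(\<integral>y. indicator {0..h} y * v y \<partial>lborel) = (\<integral>y. indicator {0..h} y * q y \<partial>lborel)"
    and v_gain: "(\<integral>y. indicator {0..h} y * (w y * \<phi> (q y)) \<partial>lborel)
      \<le> (\<integral>y. indicator {0..h} y * (w y * \<phi> (v y)) \<partial>lborel)"
    using exists_monotone_rearrangement[OF t u(1) less_imp_le[OF h] \<phi>_grid w(1) w_abs]
    unfolding q_def by blast
  have w_meas: "w \<in> borel_measurable lborel" using borel_measurable_mono[OF w(1)] by simp
  have q_meas: "q \<in> borel_measurable lborel"
    unfolding q_def by (rule borel_measurable_card_levels[OF t u(1)])
  have "\<bar>(\<integral>y. indicator {0..h} y * (1 * q y) \<partial>lborel) - (\<integral>y. indicator {0..h} y * (1 * u y) \<partial>lborel)\<bar> \<le> \<eta> * h"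
    using q_close h
    by (intro integral_indicator_Icc_weighted_comp_diff_le[OF continuous_on_id compact_Icc _ _ q_meas u(1) q_range u(2)])
       (auto intro: less_imp_le)
  moreover have "\<bar>(\<integral>y. indicator {0..h} y * (w y * \<phi> (q y)) \<partial>lborel)
      - (\<integral>y. indicator {0..h} y * (w y * \<phi> (u y)) \<partial>lborel)\<bar> \<le> \<eta> * h"
    using \<phi>_uc[OF u(2) q_range] q_close h
    by (intro integral_indicator_Icc_weighted_comp_diff_le[OF \<phi>(2) compact_Icc w_meas w_abs q_meas u(1) q_range u(2)])
       (auto intro: less_imp_le)
  ultimately show thesis
    using v(1,2) grid_range[OF v(3)] v_length v_gain \<eta>(2) by (intro that[of v]) (auto simp: abs_le_iff)
qed

section \<open>Limits along Helly-selected subsequences\<close>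

lemma tendsto_indicator_atLeastAtMost_right:
  fixes hs :: "nat \<Rightarrow> real"
  assumes "hs \<longlonglongrightarrow> h" and "y \<noteq> h"
  shows "(\<lambda>n. indicator {a..hs n} y :: real) \<longlonglongrightarrow> indicator {a..h} y"
proof (rule tendsto_eventually)
  consider "y < h" | "h < y" using \<open>y \<noteq> h\<close> by linarith
  then have "\<forall>\<^sub>F n in sequentially. (y \<le> hs n) = (y \<le> h)"
  proof cases
    case 1
    have "\<forall>\<^sub>F n in sequentially. y < hs n" using order_tendstoD(1)[OF assms(1) 1] .
    then show ?thesis by eventually_elim (use 1 in auto)
  next
    case 2
    have "\<forall>\<^sub>F n in sequentially. hs n < y" using order_tendstoD(2)[OF assms(1) 2] .
    then show ?thesis by eventually_elim (use 2 in auto)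
  qed
  then show "\<forall>\<^sub>F n in sequentially. indicator {a..hs n} y = (indicator {a..h} y :: real)"
    by eventually_elim (simp add: indicator_def)
qed

text \<open>The pointwise convergence fails at most at \<open>h\<close> and at the countably many discontinuities of
  the monotone \<open>F\<close>, a null set; dominated convergence does the rest.\<close>

lemma tendsto_integral_Helly_limit:
  fixes hs :: "nat \<Rightarrow> real" and vs :: "nat \<Rightarrow> real \<Rightarrow> real" and F :: "real \<Rightarrow> real"
    and \<Phi> :: "real \<Rightarrow> real \<Rightarrow> real"
  assumes hs: "hs \<longlonglongrightarrow> h" "\<And>n. hs n \<in> {0..L}"
    and vs: "\<And>n. mono (vs n)" "\<And>n y. vs n y \<in> {a..b}"
    and F: "mono F" "\<And>x. isCont F x \<Longrightarrow> (\<lambda>n. vs n x) \<longlonglongrightarrow> F x"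
    and \<Phi>_meas: "\<And>f. f \<in> borel_measurable lborel \<Longrightarrow> (\<And>y. f y \<in> {a..b})
      \<Longrightarrow> (\<lambda>y. \<Phi> y (f y)) \<in> borel_measurable lborel"
    and \<Phi>_cont: "\<And>y. continuous_on {a..b} (\<Phi> y)"
    and \<Phi>_bound: "\<And>y x. x \<in> {a..b} \<Longrightarrow> \<bar>\<Phi> y x\<bar> \<le> C"
  shows "(\<lambda>n. \<integral>y. indicator {0..hs n} y * \<Phi> y (vs n y) \<partial>lborel)
    \<longlonglongrightarrow> (\<integral>y. indicator {0..h} y * \<Phi> y (max a (min b (F y))) \<partial>lborel)"
proof -
  define w where "w y = max a (min b (F y))" for y
  have "a \<le> b" using vs(2)[of 0 0] by simp
  have w_mono: "mono w"
    unfolding w_def by (intro monoI max.mono min.mono order_refl monoD[OF F(1)])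
  have w_range: "w y \<in> {a..b}" for y
    unfolding w_def using \<open>a \<le> b\<close> by auto
  have "C \<ge> 0" using \<Phi>_bound[of a 0] \<open>a \<le> b\<close> by auto
  have int_bound: "integrable lborel (\<lambda>y. indicator {0..L} y * C)"
    by (rule integrable_indicator_Icc_times_bounded[where C=C]) (use \<open>C \<ge> 0\<close> in auto)
  have mono_meas: "f \<in> borel_measurable lborel" if "mono f" for f :: "real \<Rightarrow> real"
    using borel_measurable_mono[OF that] by simp
  have limit_meas: "(\<lambda>y. indicator {0..h} y * \<Phi> y (w y)) \<in> borel_measurable lborel"
    using \<Phi>_meas[OF mono_meas[OF w_mono] w_range] by measurable
  have seq_meas: "(\<lambda>y. indicator {0..hs n} y * \<Phi> y (vs n y)) \<in> borel_measurable lborel" for n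
    using \<Phi>_meas[OF mono_meas[OF vs(1)] vs(2)] by measurable
  have dominated: "AE y in lborel. norm (indicator {0..hs n} y * \<Phi> y (vs n y)) \<le> indicator {0..L} y * C" for n
    using hs(2)[of n] \<Phi>_bound[OF vs(2)] \<open>C \<ge> 0\<close> by (intro AE_I2) (auto simp: indicator_def)
  have "countable ({x. \<not> isCont F x} \<union> {h})" using mono_ctble_discont[OF F(1)] by simp
  then have "AE y in lborel. y \<notin> {x. \<not> isCont F x} \<union> {h}"
    by (rule AE_not_in[OF countable_imp_null_set_lborel])
  then have pointwise: "AE y in lborel.
      (\<lambda>n. indicator {0..hs n} y * \<Phi> y (vs n y)) \<longlonglongrightarrow> indicator {0..h} y * \<Phi> y (w y)"
  proof eventually_elim
    case (elim y)
    then have cont: "isCont F y" and "y \<noteq> h" by auto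
    have vs_lim: "(\<lambda>n. vs n y) \<longlonglongrightarrow> F y" using F(2)[OF cont] .
    have "F y \<in> {a..b}"
      using vs(2) by (auto intro: LIMSEQ_le_const[OF vs_lim] LIMSEQ_le_const2[OF vs_lim])
    then have "(\<lambda>n. \<Phi> y (vs n y)) \<longlonglongrightarrow> \<Phi> y (F y)"
      by (rule continuous_on_tendsto_compose[OF \<Phi>_cont vs_lim]) (use vs(2) in \<open>auto intro: always_eventually\<close>)
    moreover have "w y = F y" unfolding w_def using \<open>F y \<in> {a..b}\<close> by simp
    ultimately have "(\<lambda>n. \<Phi> y (vs n y)) \<longlonglongrightarrow> \<Phi> y (w y)" by simp
    then show ?case
      by (intro tendsto_mult tendsto_indicator_atLeastAtMost_right[OF hs(1) \<open>y \<noteq> h\<close>])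
  qed
  show ?thesis unfolding w_def[symmetric]
    by (rule integral_dominated_convergence[OF limit_meas seq_meas int_bound pointwise dominated])
qed

section \<open>The light-capture functions \<open>G\<close> and \<open>g\<close>\<close>

lemma one_minus_exp_neg_div_mult_mono:
  fixes \<kappa> a b :: real
  assumes "\<kappa> > 0" and "0 < a" and "a \<le> b"
  shows "(1 - exp (- \<kappa> / a)) * a \<le> (1 - exp (- \<kappa> / b)) * b"
proof (rule DERIV_nonneg_imp_nondecreasing[OF \<open>a \<le> b\<close>])
  fix x assume "a \<le> x" "x \<le> b"
  then have x: "x > 0" using \<open>0 < a\<close> by simp
  have "DERIV (\<lambda>c. (1 - exp (- \<kappa> / c)) * c) x :> 1 - exp (- \<kappa> / x) * (1 + \<kappa> / x)"
    using x by (auto intro!: derivative_eq_intros simp: power2_eq_square field_simps)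
  moreover have "exp (- \<kappa> / x) * (1 + \<kappa> / x) \<le> exp (- \<kappa> / x) * exp (\<kappa> / x)"
    by (intro mult_left_mono exp_ge_add_one_self) auto
  then have "0 \<le> 1 - exp (- \<kappa> / x) * (1 + \<kappa> / x)"
    by (simp add: exp_minus_inverse mult.commute)
  ultimately show "\<exists>y. DERIV (\<lambda>c. (1 - exp (- \<kappa> / c)) * c) x :> y \<and> y \<ge> 0"
    by blast
qed

locale stem =
  fixes \<theta>\<^sub>0 \<kappa> :: real
  assumes \<theta>\<^sub>0: "0 < \<theta>\<^sub>0" "\<theta>\<^sub>0 < pi / 2" and \<kappa>: "0 < \<kappa>"
begin

lemma cos_diff_pos: "\<theta> \<in> {\<theta>\<^sub>0..pi/2} \<Longrightarrow> 0 < cos (\<theta> - \<theta>\<^sub>0)"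
  using \<theta>\<^sub>0 by (intro cos_gt_zero_pi) auto

lemma sin_\<theta>\<^sub>0_pos: "0 < sin \<theta>\<^sub>0"
  using \<theta>\<^sub>0 by (intro sin_gt_zero) auto

lemma sin_\<theta>\<^sub>0_le: "\<theta> \<in> {\<theta>\<^sub>0..pi/2} \<Longrightarrow> sin \<theta>\<^sub>0 \<le> sin \<theta>"
  using \<theta>\<^sub>0 by (intro sin_monotone_2pi_le) auto

lemma G1_nonneg: "\<theta> \<in> {\<theta>\<^sub>0..pi/2} \<Longrightarrow> 0 \<le> G1 \<kappa> \<theta>\<^sub>0 \<theta>"
  using cos_diff_pos[of \<theta>] \<kappa> by (simp add: G1_def divide_nonneg_pos)

lemma G1_le_one: "\<theta> \<in> {\<theta>\<^sub>0..pi/2} \<Longrightarrow> G1 \<kappa> \<theta>\<^sub>0 \<theta> \<le> 1"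
  using cos_diff_pos[of \<theta>] \<kappa> unfolding G1_def
  by (intro mult_le_one) (auto simp: divide_nonneg_pos)

lemma G1_antimono: "\<theta> \<in> {\<theta>\<^sub>0..pi/2} \<Longrightarrow> \<theta>' \<in> {\<theta>..pi/2} \<Longrightarrow> G1 \<kappa> \<theta>\<^sub>0 \<theta>' \<le> G1 \<kappa> \<theta>\<^sub>0 \<theta>"
  unfolding G1_def using \<theta>\<^sub>0 cos_diff_pos[of \<theta>']
  by (intro one_minus_exp_neg_div_mult_mono[OF \<kappa>] cos_monotone_0_pi_le) auto

lemma g1_antimono: "\<theta> \<in> {\<theta>\<^sub>0..pi/2} \<Longrightarrow> \<theta>' \<in> {\<theta>..pi/2} \<Longrightarrow> g1 \<kappa> \<theta>\<^sub>0 \<theta>' \<le> g1 \<kappa> \<theta>\<^sub>0 \<theta>"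
  unfolding g1_def using \<theta>\<^sub>0 G1_antimono[of \<theta> \<theta>'] G1_nonneg[of \<theta>'] sin_\<theta>\<^sub>0_le[of \<theta>] sin_\<theta>\<^sub>0_pos
  by (intro frac_le sin_monotone_2pi_le) auto

lemma g1_bounds: "\<theta> \<in> {\<theta>\<^sub>0..pi/2} \<Longrightarrow> g1 \<kappa> \<theta>\<^sub>0 \<theta> \<in> {0..1 / sin \<theta>\<^sub>0}"
  unfolding g1_def using G1_nonneg[of \<theta>] G1_le_one[of \<theta>] sin_\<theta>\<^sub>0_le[of \<theta>] sin_\<theta>\<^sub>0_pos
  by (auto intro: frac_le)

lemma g1_continuous: "continuous_on {\<theta>\<^sub>0..pi/2} (g1 \<kappa> \<theta>\<^sub>0)"
proof -
  have "cos (\<theta> - \<theta>\<^sub>0) \<noteq> 0" "sin \<theta> \<noteq> 0" if "\<theta> \<in> {\<theta>\<^sub>0..pi/2}" for \<theta>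
    using cos_diff_pos[OF that] sin_\<theta>\<^sub>0_le[OF that] sin_\<theta>\<^sub>0_pos by auto
  then show ?thesis
    unfolding g1_def[abs_def] G1_def by (intro continuous_intros) auto
qed

definition U :: real where "U = 1 / sin \<theta>\<^sub>0"

definition psi :: "real \<Rightarrow> real" where "psi u = g1 \<kappa> \<theta>\<^sub>0 (arcsin (1 / u))"

lemma U_ge_one: "1 \<le> U"
  unfolding U_def using sin_\<theta>\<^sub>0_pos sin_le_one[of \<theta>\<^sub>0] by simp

lemma arcsin_inverse_range: "u \<in> {1..U} \<Longrightarrow> arcsin (1 / u) \<in> {\<theta>\<^sub>0..pi/2}"
proof -
  assume u: "u \<in> {1..U}"
  then have "sin \<theta>\<^sub>0 \<le> 1 / u" "1 / u \<le> 1" "0 \<le> 1 / u"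
    using sin_\<theta>\<^sub>0_pos by (auto simp: U_def field_simps)
  then have "arcsin (sin \<theta>\<^sub>0) \<le> arcsin (1 / u)"
    using sin_\<theta>\<^sub>0_pos by (intro arcsin_le_arcsin) auto
  moreover have "arcsin (1 / u) \<le> pi / 2" using \<open>0 \<le> 1 / u\<close> \<open>1 / u \<le> 1\<close> by (intro arcsin_ubound) linarith+
  ultimately show ?thesis using \<theta>\<^sub>0 by (simp add: arcsin_sin)
qed

lemma sin_arcsin_inverse: "1 \<le> u \<Longrightarrow> sin (arcsin (1 / u)) = 1 / u"
  by (intro sin_arcsin) (auto intro: order_trans[of _ 0])

lemma inverse_sin_range: "\<theta> \<in> {\<theta>\<^sub>0..pi/2} \<Longrightarrow> 1 / sin \<theta> \<in> {1..U}"
  using sin_\<theta>\<^sub>0_le[of \<theta>] sin_\<theta>\<^sub>0_pos sin_le_one[of \<theta>] unfolding U_def by (auto intro: frac_le)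

lemma psi_inverse_sin: "\<theta> \<in> {\<theta>\<^sub>0..pi/2} \<Longrightarrow> psi (1 / sin \<theta>) = g1 \<kappa> \<theta>\<^sub>0 \<theta>"
  unfolding psi_def using \<theta>\<^sub>0 by (simp add: arcsin_sin)

lemma psi_mono: "mono_on {1..U} psi"
proof (rule mono_onI)
  fix u v assume uv: "u \<in> {1..U}" "v \<in> {1..U}" "u \<le> v"
  then have "arcsin (1 / v) \<le> arcsin (1 / u)"
    by (intro arcsin_le_arcsin) (auto simp: field_simps intro: order_trans[of _ 0])
  then show "psi u \<le> psi v"
    unfolding psi_def using arcsin_inverse_range[OF uv(1)] arcsin_inverse_range[OF uv(2)]
    by (intro g1_antimono) auto
qed

lemma psi_bounds: "u \<in> {1..U} \<Longrightarrow> psi u \<in> {0..U}"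
  using g1_bounds[OF arcsin_inverse_range] unfolding psi_def U_def .

lemma psi_continuous: "continuous_on {1..U} psi"
  unfolding psi_def[abs_def]
proof (rule continuous_on_compose2[OF g1_continuous])
  show "continuous_on {1..U} (\<lambda>u. arcsin (1 / u))"
    by (intro continuous_intros) (auto simp: field_simps)
qed (use arcsin_inverse_range in auto)

end

lemma set_integral_eq_indicator_integral:
  fixes f g :: "'a \<Rightarrow> real"
  assumes "\<And>y. y \<in> A \<Longrightarrow> f y = g y"
  shows "(LINT y:A|M. f y) = (\<integral>y. indicator A y * g y \<partial>M)"
  unfolding set_lebesgue_integral_def using assms
  by (intro Bochner_Integration.integral_cong) (auto simp: indicator_def)

locale OP1 = stem +
  fixes len :: real and I :: "real \<Rightarrow> real"
  assumes len: "0 < len" and I_range: "\<forall>y\<ge>0. I y \<in> {0..1}" and I_mono: "mono_on {0..} I"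
begin

definition light :: "real \<Rightarrow> real" where "light y = I (max 0 y)"

lemma light_mono: "mono light"
  unfolding light_def by (intro monoI mono_onD[OF I_mono]) auto

lemma light_range: "light y \<in> {0..1}"
  unfolding light_def using I_range by simp

lemma borel_measurable_light: "light \<in> borel_measurable lborel"
  using borel_measurable_mono[OF light_mono] by simp

lemma admissible_speed:
  assumes "admissible1 \<theta>\<^sub>0 len h \<theta>"
  obtains u where "u \<in> borel_measurable lborel" and "\<And>y. u y \<in> {1..U}"
    and "(\<integral>y. indicator {0..h} y * u y \<partial>lborel) = len"
    and "J1 \<kappa> \<theta>\<^sub>0 I h \<theta> = (\<integral>y. indicator {0..h} y * (light y * psi (u y)) \<partial>lborel)"
proof
  define \<theta>' where "\<theta>' y = (if y \<in> {0..h} then \<theta> y else \<theta>\<^sub>0)" for y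
  define u where "u y = 1 / sin (\<theta>' y)" for y
  have \<theta>_meas: "\<theta> \<in> borel_measurable (restrict_space lborel {0..h})"
    and \<theta>_range: "\<And>y. y \<in> {0..h} \<Longrightarrow> \<theta> y \<in> {\<theta>\<^sub>0..pi/2}"
    and length: "(LINT y:{0..h}|lborel. 1 / sin (\<theta> y)) = len"
    using assms unfolding admissible1_def by auto
  have "\<theta>' \<in> borel_measurable lborel"
    using \<theta>_meas measurable_restrict_space_iff[of "{0..h}" lborel \<theta>\<^sub>0 borel \<theta>] by (simp add: \<theta>'_def[abs_def])
  then show "u \<in> borel_measurable lborel" unfolding u_def[abs_def] by measurable
  have \<theta>'_range: "\<theta>' y \<in> {\<theta>\<^sub>0..pi/2}" for y
    using \<theta>_range \<theta>\<^sub>0 by (auto simp: \<theta>'_def)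
  then show "u y \<in> {1..U}" for y unfolding u_def by (rule inverse_sin_range)
  show "(\<integral>y. indicator {0..h} y * u y \<partial>lborel) = len"
    unfolding length[symmetric] by (rule set_integral_eq_indicator_integral[symmetric]) (simp add: u_def \<theta>'_def)
  show "J1 \<kappa> \<theta>\<^sub>0 I h \<theta> = (\<integral>y. indicator {0..h} y * (light y * psi (u y)) \<partial>lborel)"
    unfolding J1_def using \<theta>_range
    by (intro set_integral_eq_indicator_integral) (simp add: u_def \<theta>'_def light_def psi_inverse_sin)
qed

lemma admissible_of_mono_speed:
  assumes w: "mono w" "\<And>y. w y \<in> {1..U}" and "0 < h"
    and length: "(\<integral>y. indicator {0..h} y * w y \<partial>lborel) = len"
  shows "admissible1 \<theta>\<^sub>0 len h (\<lambda>y. arcsin (1 / w y))"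
    and "J1 \<kappa> \<theta>\<^sub>0 I h (\<lambda>y. arcsin (1 / w y)) = (\<integral>y. indicator {0..h} y * (light y * psi (w y)) \<partial>lborel)"
proof -
  have "continuous_on {1..U} (\<lambda>x. arcsin (1 / x))"
    by (intro continuous_intros) (auto simp: field_simps)
  moreover have "w \<in> borel_measurable lborel" using borel_measurable_mono[OF w(1)] by simp
  ultimately have "(\<lambda>y. arcsin (1 / w y)) \<in> borel_measurable lborel"
    using w(2) by (rule borel_measurable_continuous_on_comp)
  moreover have "(LINT y:{0..h}|lborel. 1 / sin (arcsin (1 / w y))) = len"
    unfolding length[symmetric] using w(2)
    by (intro set_integral_eq_indicator_integral) (simp add: sin_arcsin_inverse)
  ultimately show "admissible1 \<theta>\<^sub>0 len h (\<lambda>y. arcsin (1 / w y))"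
    unfolding admissible1_def using \<open>0 < h\<close> arcsin_inverse_range[OF w(2)]
    by (simp add: measurable_restrict_space1)
  show "J1 \<kappa> \<theta>\<^sub>0 I h (\<lambda>y. arcsin (1 / w y)) = (\<integral>y. indicator {0..h} y * (light y * psi (w y)) \<partial>lborel)"
    unfolding J1_def by (intro set_integral_eq_indicator_integral) (simp add: light_def psi_def)
qed

lemma height_bounds:
  assumes u: "u \<in> borel_measurable lborel" "\<And>y. u y \<in> {1..U}" and "0 \<le> h"
    and length: "(\<integral>y. indicator {0..h} y * u y \<partial>lborel) = len"
  shows "h \<in> {len / U..len}"
proof -
  have int_u: "integrable lborel (\<lambda>y. indicator {0..h} y * u y)"
  proof (rule integrable_indicator_Icc_times_bounded[where C=U])
    show "\<bar>u y\<bar> \<le> U" for y using u(2)[of y] by auto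
  qed (rule u(1))
  have int_c: "integrable lborel (\<lambda>y. indicator {0..h} y * c)" for c :: real
    by (rule integrable_indicator_Icc_times_bounded[where C="\<bar>c\<bar>"]) auto
  have "(\<integral>y. indicator {0..h} y * 1 \<partial>lborel) \<le> len"
    unfolding length[symmetric] using u(2) by (intro integral_mono[OF int_c int_u]) (auto simp: indicator_def)
  moreover have "len \<le> (\<integral>y. indicator {0..h} y * U \<partial>lborel)"
    unfolding length[symmetric] using u(2) by (intro integral_mono[OF int_u int_c]) (auto simp: indicator_def)
  ultimately show ?thesis
    using \<open>0 \<le> h\<close> U_ge_one by (auto simp: field_simps)
qed

lemma light_times_psi_range: "x \<in> {1..U} \<Longrightarrow> light y * psi x \<in> {0..U}"
  using light_range[of y] psi_bounds[of x] mult_mono[of "light y" 1 "psi x" U] by auto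

lemma integral_light_psi_le:
  assumes u: "u \<in> borel_measurable lborel" "\<And>y. u y \<in> {1..U}" and h: "0 \<le> h" "h \<le> len"
  shows "(\<integral>y. indicator {0..h} y * (light y * psi (u y)) \<partial>lborel) \<le> U * len"
proof -
  have "(\<lambda>y. light y * psi (u y)) \<in> borel_measurable lborel"
    using borel_measurable_light borel_measurable_continuous_on_comp[OF psi_continuous u(1)] u(2) by measurable
  then have "integrable lborel (\<lambda>y. indicator {0..h} y * (light y * psi (u y)))"
    using light_times_psi_range[OF u(2)] by (intro integrable_indicator_Icc_times_bounded[where C=U]) auto
  moreover have "integrable lborel (\<lambda>y. indicator {0..h} y * U)"
    by (rule integrable_indicator_Icc_times_bounded[where C="\<bar>U\<bar>"]) auto
  ultimately have "(\<integral>y. indicator {0..h} y * (light y * psi (u y)) \<partial>lborel) \<le> (\<integral>y. indicator {0..h} y * U \<partial>lborel)"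
    using light_times_psi_range[OF u(2)] U_ge_one by (intro integral_mono) (auto simp: indicator_def)
  also have "\<dots> \<le> U * len" using h U_ge_one by simp
  finally show ?thesis .
qed

definition J_sup :: real where
  "J_sup = Sup {J1 \<kappa> \<theta>\<^sub>0 I h \<theta> | h \<theta>. admissible1 \<theta>\<^sub>0 len h \<theta>}"

lemma admissible_exists: "admissible1 \<theta>\<^sub>0 len (len / U) (\<lambda>_. arcsin (1 / U))"
  using admissible_of_mono_speed(1)[of "\<lambda>_. U" "len / U"] U_ge_one len by (simp add: mono_def)

lemma J1_le_U_len: "admissible1 \<theta>\<^sub>0 len h \<theta> \<Longrightarrow> J1 \<kappa> \<theta>\<^sub>0 I h \<theta> \<le> U * len"
proof -
  assume adm: "admissible1 \<theta>\<^sub>0 len h \<theta>"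
  then have "0 < h" by (simp add: admissible1_def)
  obtain u where u: "u \<in> borel_measurable lborel" "\<And>y. u y \<in> {1..U}"
    and "(\<integral>y. indicator {0..h} y * u y \<partial>lborel) = len"
    and "J1 \<kappa> \<theta>\<^sub>0 I h \<theta> = (\<integral>y. indicator {0..h} y * (light y * psi (u y)) \<partial>lborel)"
    using admissible_speed[OF adm] by blast
  then show ?thesis using height_bounds[OF u] integral_light_psi_le[OF u] \<open>0 < h\<close> by simp
qed

lemma J1_values_bdd_above: "bdd_above {J1 \<kappa> \<theta>\<^sub>0 I h \<theta> | h \<theta>. admissible1 \<theta>\<^sub>0 len h \<theta>}"
  using J1_le_U_len by (intro bdd_aboveI[of _ "U * len"]) auto

lemma J1_le_J_sup: "admissible1 \<theta>\<^sub>0 len h \<theta> \<Longrightarrow> J1 \<kappa> \<theta>\<^sub>0 I h \<theta> \<le> J_sup"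
  unfolding J_sup_def by (rule cSup_upper[OF _ J1_values_bdd_above]) auto

definition near_optimal :: "real \<Rightarrow> real \<Rightarrow> (real \<Rightarrow> real) \<Rightarrow> bool" where
  "near_optimal \<epsilon> h v \<longleftrightarrow> h \<in> {len / U..len} \<and> mono v \<and> (\<forall>x. continuous (at_right x) v)
    \<and> (\<forall>y. v y \<in> {1..U}) \<and> \<bar>(\<integral>y. indicator {0..h} y * v y \<partial>lborel) - len\<bar> \<le> \<epsilon>
    \<and> J_sup - 2 * \<epsilon> \<le> (\<integral>y. indicator {0..h} y * (light y * psi (v y)) \<partial>lborel)"

lemma near_optimal_exists:
  assumes "0 < \<epsilon>"
  shows "\<exists>h v. near_optimal \<epsilon> h v"
proof -
  have "J_sup - \<epsilon> < J_sup" using \<open>0 < \<epsilon>\<close> by simp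
  then obtain h \<theta> where adm: "admissible1 \<theta>\<^sub>0 len h \<theta>" and near: "J_sup - \<epsilon> < J1 \<kappa> \<theta>\<^sub>0 I h \<theta>"
    unfolding J_sup_def using less_cSup_iff[OF _ J1_values_bdd_above] admissible_exists by blast
  then have "0 < h" by (simp add: admissible1_def)
  obtain u where u: "u \<in> borel_measurable lborel" "\<And>y. u y \<in> {1..U}"
    and length: "(\<integral>y. indicator {0..h} y * u y \<partial>lborel) = len"
    and J1_eq: "J1 \<kappa> \<theta>\<^sub>0 I h \<theta> = (\<integral>y. indicator {0..h} y * (light y * psi (u y)) \<partial>lborel)"
    using admissible_speed[OF adm] by blast
  obtain v where v: "mono v" "\<And>x. continuous (at_right x) v" "\<And>y. v y \<in> {1..U}"
    and v_length: "\<bar>(\<integral>y. indicator {0..h} y * v y \<partial>lborel) - (\<integral>y. indicator {0..h} y * u y \<partial>lborel)\<bar> \<le> \<epsilon>"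
    and v_gain: "(\<integral>y. indicator {0..h} y * (light y * psi (u y)) \<partial>lborel) - \<epsilon>
      \<le> (\<integral>y. indicator {0..h} y * (light y * psi (v y)) \<partial>lborel)"
    by (rule exists_monotone_step_approximation[OF psi_mono psi_continuous light_mono _ _ u \<open>0 < h\<close> \<open>0 < \<epsilon>\<close>])
       (use light_range in auto)
  have "near_optimal \<epsilon> h v"
    unfolding near_optimal_def
  proof (intro conjI allI v)
    show "h \<in> {len / U..len}" using height_bounds[OF u less_imp_le[OF \<open>0 < h\<close>] length] .
    show "\<bar>(\<integral>y. indicator {0..h} y * v y \<partial>lborel) - len\<bar> \<le> \<epsilon>" using v_length length by simp
    show "J_sup - 2 * \<epsilon> \<le> (\<integral>y. indicator {0..h} y * (light y * psi (v y)) \<partial>lborel)"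
      using v_gain J1_eq near by linarith
  qed
  then show ?thesis by blast
qed

lemma near_optimal_limit:
  fixes e :: "nat \<Rightarrow> real"
  assumes e: "e \<longlonglongrightarrow> 0" and opt: "\<And>n. near_optimal (e n) (hs n) (vs n)"
    and hs_lim: "hs \<longlonglongrightarrow> h" and F: "mono F" "\<And>x. isCont F x \<Longrightarrow> (\<lambda>n. vs n x) \<longlonglongrightarrow> F x"
  defines "w \<equiv> \<lambda>y. max 1 (min U (F y))"
  shows "(\<integral>y. indicator {0..h} y * w y \<partial>lborel) = len"
    and "J_sup \<le> (\<integral>y. indicator {0..h} y * (light y * psi (w y)) \<partial>lborel)"
proof -
  have hs: "\<And>n. hs n \<in> {len / U..len}"
    and vs: "\<And>n. mono (vs n)" "\<And>n y. vs n y \<in> {1..U}"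
    and vs_length: "\<And>n. \<bar>(\<integral>y. indicator {0..hs n} y * vs n y \<partial>lborel) - len\<bar> \<le> e n"
    and vs_gain: "\<And>n. J_sup - 2 * e n \<le> (\<integral>y. indicator {0..hs n} y * (light y * psi (vs n y)) \<partial>lborel)"
    using opt unfolding near_optimal_def by auto
  have hs_range: "hs n \<in> {0..len}" for n
    using hs[of n] len U_ge_one by (auto intro: order_trans[of _ "len / U"])
  have "(\<lambda>n. \<integral>y. indicator {0..hs n} y * vs n y \<partial>lborel) \<longlonglongrightarrow> (\<integral>y. indicator {0..h} y * w y \<partial>lborel)"
    unfolding w_def using vs(2) U_ge_one
    by (intro tendsto_integral_Helly_limit[where \<Phi>="\<lambda>y x. x" and C=U, OF hs_lim hs_range vs F])
       (auto intro: continuous_on_id)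
  moreover have "(\<lambda>n. \<integral>y. indicator {0..hs n} y * vs n y \<partial>lborel) \<longlonglongrightarrow> len"
  proof (rule tendsto_sandwich)
    show "(\<lambda>n. len - e n) \<longlonglongrightarrow> len" using tendsto_diff[OF tendsto_const e] by simp
    show "(\<lambda>n. len + e n) \<longlonglongrightarrow> len" using tendsto_add[OF tendsto_const e] by simp
  qed (use vs_length in \<open>auto simp: abs_diff_le_iff intro: always_eventually\<close>)
  ultimately show "(\<integral>y. indicator {0..h} y * w y \<partial>lborel) = len"
    by (rule LIMSEQ_unique)
  have "(\<lambda>n. \<integral>y. indicator {0..hs n} y * (light y * psi (vs n y)) \<partial>lborel)
      \<longlonglongrightarrow> (\<integral>y. indicator {0..h} y * (light y * psi (w y)) \<partial>lborel)"
    unfolding w_def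
  proof (rule tendsto_integral_Helly_limit[where C=U, OF hs_lim hs_range vs F])
    show "(\<lambda>y. light y * psi (f y)) \<in> borel_measurable lborel"
      if "f \<in> borel_measurable lborel" "\<And>y. f y \<in> {1..U}" for f
      using borel_measurable_light borel_measurable_continuous_on_comp[OF psi_continuous that] by measurable
    show "continuous_on {1..U} (\<lambda>x. light y * psi x)" for y
      by (intro continuous_intros psi_continuous)
    show "\<bar>light y * psi x\<bar> \<le> U" if "x \<in> {1..U}" for x y
      using light_times_psi_range[OF that, of y] by simp
  qed
  moreover have "(\<lambda>n. J_sup - 2 * e n) \<longlonglongrightarrow> J_sup"
    using tendsto_diff[OF tendsto_const tendsto_mult[OF tendsto_const e], of J_sup 2] by simp
  ultimately show "J_sup \<le> (\<integral>y. indicator {0..h} y * (light y * psi (w y)) \<partial>lborel)"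
    using vs_gain by (intro LIMSEQ_le) auto
qed

lemma monotone_speed_attaining_J_sup:
  obtains h w where "0 < h" and "mono w" and "\<And>y. w y \<in> {1..U}"
    and "(\<integral>y. indicator {0..h} y * w y \<partial>lborel) = len"
    and "J_sup \<le> (\<integral>y. indicator {0..h} y * (light y * psi (w y)) \<partial>lborel)"
proof -
  define e where "e n = inverse (real (Suc n))" for n
  have "\<forall>n. \<exists>h v. near_optimal (e n) h v" using near_optimal_exists by (simp add: e_def)
  then obtain hs vs where opt: "\<And>n. near_optimal (e n) (hs n) (vs n)" by metis
  then have hs: "hs n \<in> {len / U..len}" and vs: "mono (vs n)" "continuous (at_right x) (vs n)"
    and vs_range: "vs n x \<in> {1..U}" for n x
    unfolding near_optimal_def by auto
  have vs_abs: "\<bar>vs n x\<bar> \<le> U" for n x using vs_range[of n x] by auto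
  obtain h r where h: "h \<in> {len / U..len}" and r: "strict_mono r" "(hs \<circ> r) \<longlonglongrightarrow> h"
    by (rule seq_compactE[OF compact_imp_seq_compact[OF compact_Icc] allI[OF hs]])
  obtain s F where s: "strict_mono s" and F: "mono F"
    and F_lim: "\<And>x. isCont F x \<Longrightarrow> (\<lambda>n. vs (r (s n)) x) \<longlonglongrightarrow> F x"
    using Helly_selection[of "\<lambda>n. vs (r n)" U] vs vs_abs by blast
  define \<sigma> where "\<sigma> = r \<circ> s"
  have \<sigma>: "strict_mono \<sigma>" unfolding \<sigma>_def using r(1) s by (rule strict_mono_o)
  have e_lim: "(\<lambda>n. e (\<sigma> n)) \<longlonglongrightarrow> 0"
    using LIMSEQ_subseq_LIMSEQ[OF LIMSEQ_inverse_real_of_nat \<sigma>] by (simp add: e_def comp_def)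
  have hs_lim: "(\<lambda>n. hs (\<sigma> n)) \<longlonglongrightarrow> h"
    using LIMSEQ_subseq_LIMSEQ[OF r(2) s] by (simp add: \<sigma>_def comp_def)
  have vs_lim: "isCont F x \<Longrightarrow> (\<lambda>n. vs (\<sigma> n) x) \<longlonglongrightarrow> F x" for x
    using F_lim by (simp add: \<sigma>_def)
  note limit = near_optimal_limit[OF e_lim opt hs_lim F vs_lim]
  show thesis
  proof (rule that[OF _ _ _ limit])
    show "0 < h" using h len U_ge_one by (auto intro: less_le_trans[of _ "len / U"])
    show "mono (\<lambda>y. max 1 (min U (F y)))" by (intro monoI max.mono min.mono order_refl monoD[OF F])
    show "max 1 (min U (F y)) \<in> {1..U}" for y using U_ge_one by auto
  qed
qed

theorem optimal_solution_exists: "\<exists>h \<theta>. optimal1 \<kappa> \<theta>\<^sub>0 len I h \<theta>"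
proof -
  obtain h w where "0 < h" "mono w" "\<And>y. w y \<in> {1..U}"
    and length: "(\<integral>y. indicator {0..h} y * w y \<partial>lborel) = len"
    and sup_le: "J_sup \<le> (\<integral>y. indicator {0..h} y * (light y * psi (w y)) \<partial>lborel)"
    using monotone_speed_attaining_J_sup by blast
  note optimal = admissible_of_mono_speed[OF \<open>mono w\<close> \<open>\<And>y. w y \<in> {1..U}\<close> \<open>0 < h\<close> length]
  have "optimal1 \<kappa> \<theta>\<^sub>0 len I h (\<lambda>y. arcsin (1 / w y))"
    unfolding optimal1_def using optimal sup_le J1_le_J_sup by (auto intro: order_trans)
  then show ?thesis by blast
qed

end

theorem theorem3p1:
  fixes \<theta>\<^sub>0 len \<kappa> :: real and I :: "real \<Rightarrow> real"
  assumes "0 < \<theta>\<^sub>0" and "\<theta>\<^sub>0 < pi/2" and "len > 0" and "\<kappa> > 0"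
    and "\<forall>y\<ge>0. I y \<in> {0..1}"
    and "mono_on {0..} I"
  shows "\<exists>h \<theta>. optimal1 \<kappa> \<theta>\<^sub>0 len I h \<theta>"
proof -
  interpret OP1 \<theta>\<^sub>0 \<kappa> len I using assms by unfold_locales auto
  show ?thesis by (rule optimal_solution_exists)
qed

end
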